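(* Let $\kappa_n>0$, $\gamma>0$ and $\chi_n,\tilde\omega_n\in\mathbb{R}$ satisfy $2\kappa_n\chi_n\le\gamma$ (equivalently, $4\kappa_nS_n-Q_n^2\le 0$ where $S_n=\gamma\chi_n/2$ and $Q_n=-\gamma$ is the value of $-(\gamma+i\Omega-i\tilde\omega_n)$ at $\Omega=\tilde\omega_n$). Then there exists $\epsilon>0$ such that for every real $\Omega$ with $|\tilde\omega_n-\Omega|\le\epsilon$, the solution $F_n$ of $$\frac{\mathrm{d}}{\mathrm{d}t}F_n(t)=\kappa_nF_n(t)^2-(\gamma+i\Omega-i\tilde\omega_n)F_n(t)+\frac{\gamma\chi_n}{2},\qquad F_n(0)=0,$$ converges to a constant as $t\to\infty$; that is, the trajectory of the atom–cavity mean-value dynamics converges to a Markovian behavior even though the environmental frequency $\Omega$ is only known to lie within $\epsilon$ of $\tilde\omega_n$.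
   Context: Setting: an atom level transition with frequency $\tilde\omega_n$ coupled to a non-Markovian environment with memory kernel $\alpha(t,s)=\frac{\gamma}{2}e^{-\gamma|t-s|-i\Omega(t-s)}$, where $\Omega$ is an uncertain environmental central frequency; $\kappa_n$ is the coupling (decay) rate to the environment and $\chi_n$ a real constant. The non-Markovian decay rate enters the linear mean-value equations for $\langle\sigma_n^+\sigma_n^-\rangle,\langle\sigma_n^+a\rangle,\langle\sigma_n^-a^\dagger\rangle,\langle a^\dagger a\rangle$ through the coefficients $\kappa_nF_n(t)$, $\kappa_nF_n^*(t)$; the dynamics is said to converge to Markovian behavior when $F_n(t)$ converges to a constant as $t\to\infty$. *)

theory Defs
  imports "HOL-Analysis.Analysis"
begin

definition riccati_rhs :: "real \<Rightarrow> real \<Rightarrow> real \<Rightarrow> real \<Rightarrow> real \<Rightarrow> complex \<Rightarrow> complex" where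
  "riccati_rhs kappa gamma chi omega Omega z =
     complex_of_real kappa * z\<^sup>2
     - (complex_of_real gamma + \<i> * complex_of_real Omega - \<i> * complex_of_real omega) * z
     + complex_of_real (gamma * chi / 2)"

definition is_F_solution :: "real \<Rightarrow> real \<Rightarrow> real \<Rightarrow> real \<Rightarrow> real \<Rightarrow> (real \<Rightarrow> complex) \<Rightarrow> bool" where
  "is_F_solution kappa gamma chi omega Omega F \<longleftrightarrow>
     F 0 = 0 \<and>
     (\<forall>t\<ge>0. (F has_vector_derivative riccati_rhs kappa gamma chi omega Omega (F t)) (at t within {0..}))"

end

theory Submission
  imports Defs
begin

(* The right-hand side factors as kappa (F - z1) (F - z2). When 2 kappa chi <= gamma the roots
   satisfy either |z1| < |z2| and Re (kappa (z2 - z1)) > 0, or z1 = z2 with Re (kappa z1) > 0,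
   for every Omega. Accordingly
     F t = z1 z2 (1 - exp (-s t)) / (z2 - z1 exp (-s t)),  s = kappa (z2 - z1),   or
     F t = z1 - z1 / (1 + kappa z1 t)
   solves the initial value problem with a denominator that never vanishes for t >= 0, and
   tends to z1. The difference of two solutions satisfies a linear equation H' = b H, which an
   integrating factor shows to have only the zero solution from H 0 = 0; so every solution is
   the explicit one. Since this holds for all Omega, the eps of the statement can be anything. *)

lemma linear_ode_zero_unique:
  fixes G b :: "real \<Rightarrow> 'a::{real_normed_field,banach}"
  assumes G': "\<And>t. t \<ge> 0 \<Longrightarrow> (G has_vector_derivative b t * G t) (at t within {0..})"
    and b: "continuous_on {0..} b" and G0: "G 0 = 0" and T: "T \<ge> 0"
  shows "G T = 0"
proof -
  define B where "B u = integral {0..u} b" for u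
  define H where "H u = exp (- B u) * G u" for u
  have "\<exists>c. \<forall>u\<in>{0..T}. H u = c"
  proof (rule has_derivative_zero_constant)
    fix u assume u: "u \<in> {0..T}"
    have dB: "(B has_vector_derivative b u) (at u within {0..T})"
      unfolding B_def[abs_def] by (rule integral_has_vector_derivative[OF continuous_on_subset[OF b] u]) auto
    have dG: "(G has_vector_derivative b u * G u) (at u within {0..T})"
      by (rule has_vector_derivative_within_subset[OF G']) (use u in auto)
    have dE: "((\<lambda>v. exp (- B v)) has_vector_derivative - b u * exp (- B u)) (at u within {0..T})"
      using field_vector_diff_chain_within[OF has_vector_derivative_minus[OF dB] DERIV_exp[THEN DERIV_subset]]
      by (simp add: o_def)
    have "(H has_vector_derivative 0) (at u within {0..T})"
      unfolding H_def[abs_def]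
      using has_vector_derivative_mult[OF dE dG] by (simp add: algebra_simps)
    then show "(H has_derivative (\<lambda>h. 0)) (at u within {0..T})"
      by (simp add: has_vector_derivative_def)
  qed simp
  then have "H T = H 0" using T by auto
  then show ?thesis by (simp add: H_def G0)
qed

lemma quadratic_ode_unique:
  fixes F G :: "real \<Rightarrow> 'a::{real_normed_field,banach}" and A B C :: 'a
  assumes F': "\<And>t. t \<ge> 0 \<Longrightarrow>
      (F has_vector_derivative A * (F t)\<^sup>2 + B * F t + C) (at t within {0..})"
    and G': "\<And>t. t \<ge> 0 \<Longrightarrow>
      (G has_vector_derivative A * (G t)\<^sup>2 + B * G t + C) (at t within {0..})"
    and "F 0 = G 0" and "t \<ge> 0"
  shows "F t = G t"
proof -
  have "continuous_on {0..} F" "continuous_on {0..} G"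
    using F' G' by (auto simp: continuous_on_eq_continuous_within intro: has_vector_derivative_continuous)
  then have "continuous_on {0..} (\<lambda>t. A * (F t + G t) + B)" by (intro continuous_intros)
  moreover have "((\<lambda>t. F t - G t) has_vector_derivative (A * (F t + G t) + B) * (F t - G t))
      (at t within {0..})"
    if "t \<ge> 0" for t
    using has_vector_derivative_diff[OF F'[OF that] G'[OF that]]
    by (simp add: power2_eq_square algebra_simps)
  ultimately have "F t - G t = 0"
    using linear_ode_zero_unique[of "\<lambda>t. F t - G t" "\<lambda>t. A * (F t + G t) + B" t]
      \<open>F 0 = G 0\<close> \<open>t \<ge> 0\<close> by simp
  then show ?thesis by simp
qed

lemma Re_sqrt_discriminant_pos:
  fixes a s :: complex and r :: real
  assumes s: "s\<^sup>2 = a\<^sup>2 - of_real r" and "Re s \<ge> 0" and "s \<noteq> 0"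
    and a: "Re a > 0" and r: "r \<le> (Re a)\<^sup>2"
  shows "Re s > 0" and "Re (a * cnj s) > 0"
proof -
  have Re_s2: "(Re s)\<^sup>2 - (Im s)\<^sup>2 = (Re a)\<^sup>2 - (Im a)\<^sup>2 - r"
    and Im_s2: "Re s * Im s = Re a * Im a"
    using arg_cong[OF s, of Re] arg_cong[OF s, of Im] by (simp_all add: power2_eq_square algebra_simps)
  show Re_s: "Re s > 0"
  proof (rule ccontr)
    assume "\<not> Re s > 0"
    then have "Re s = 0" using \<open>Re s \<ge> 0\<close> by simp
    then have "Im a = 0" using Im_s2 a by simp
    then have "(Im s)\<^sup>2 = r - (Re a)\<^sup>2" using Re_s2 \<open>Re s = 0\<close> by simp
    then have "(Im s)\<^sup>2 \<le> 0" using r by simp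
    then have "Im s = 0" by simp
    with \<open>Re s = 0\<close> \<open>s \<noteq> 0\<close> show False by (simp add: complex_eq_iff)
  qed
  have "Re s * (Im a * Im s) = Re a * (Im a)\<^sup>2" using Im_s2 by (simp add: power2_eq_square algebra_simps)
  then have "Re s * (Im a * Im s) \<ge> 0" using a by simp
  then have "Im a * Im s \<ge> 0" using Re_s by (simp add: zero_le_mult_iff)
  then show "Re (a * cnj s) > 0" using a Re_s by (simp add: add_pos_nonneg)
qed

lemma cmod_diff_less_cmod_add:
  fixes a s :: complex
  assumes "Re (a * cnj s) > 0"
  shows "cmod (a - s) < cmod (a + s)"
proof -
  have "(cmod (a - s))\<^sup>2 < (cmod (a + s))\<^sup>2"
    using assms unfolding cmod_power2 by (simp add: power2_eq_square algebra_simps)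
  then show ?thesis by (simp add: power_less_imp_less_base)
qed

lemma quadratic_roots_cases:
  fixes k c :: real and a :: complex
  assumes k: "k \<noteq> 0" and a: "Re a > 0" and disc: "4 * k * c \<le> (Re a)\<^sup>2"
  obtains (distinct) zm zp
    where "\<And>z. of_real k * z\<^sup>2 - a * z + of_real c = of_real k * (z - zm) * (z - zp)"
      and "cmod zm < cmod zp" and "Re (of_real k * (zp - zm)) > 0"
  | (double) z0
    where "\<And>z. of_real k * z\<^sup>2 - a * z + of_real c = of_real k * (z - z0) * (z - z0)"
      and "Re (of_real k * z0) > 0"
proof -
  define s where "s = csqrt (a\<^sup>2 - of_real (4 * k * c))"
  define zm where "zm = (a - s) / (2 * of_real k)"
  define zp where "zp = (a + s) / (2 * of_real k)"
  have "(a\<^sup>2 - s\<^sup>2) / (4 * of_real k) = of_real c" using k by (simp add: s_def)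
  moreover have "of_real k * (z - zm) * (z - zp)
      = of_real k * z\<^sup>2 - a * z + (a\<^sup>2 - s\<^sup>2) / (4 * of_real k)" for z
    using k by (simp add: zm_def zp_def field_simps power2_eq_square)
  ultimately have factor: "of_real k * z\<^sup>2 - a * z + of_real c = of_real k * (z - zm) * (z - zp)" for z
    by simp
  show ?thesis
  proof (cases "s = 0")
    case True
    then have "zp = zm" by (simp add: zm_def zp_def)
    moreover have "Re (of_real k * zm) > 0" using k a True by (simp add: zm_def)
    ultimately show ?thesis using double factor by metis
  next
    case False
    have "Re s \<ge> 0" using csqrt_principal[of "a\<^sup>2 - of_real (4 * k * c)"] by (auto simp: s_def)
    then have "Re s > 0" and "Re (a * cnj s) > 0"
      using Re_sqrt_discriminant_pos[of s a "4 * k * c"] False a disc by (auto simp: s_def)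
    moreover have "cmod zm < cmod zp"
      using cmod_diff_less_cmod_add[OF \<open>Re (a * cnj s) > 0\<close>] k
      by (simp add: zm_def zp_def norm_divide divide_strict_right_mono)
    moreover have "of_real k * (zp - zm) = s" using k by (simp add: zm_def zp_def field_simps)
    ultimately show ?thesis using distinct factor by metis
  qed
qed

lemma riccati_two_roots_solution:
  fixes K zm zp :: complex
  assumes roots: "cmod zm < cmod zp" and rate: "Re (K * (zp - zm)) > 0"
  obtains F where "F 0 = 0"
    and "\<And>t. t \<ge> 0 \<Longrightarrow> (F has_vector_derivative K * (F t - zm) * (F t - zp)) (at t)"
    and "(F \<longlongrightarrow> zm) at_top"
proof
  define s where "s = K * (zp - zm)"
  define E where "E z = exp (- (s * z))" for z
  define f where "f z = zm * zp * (1 - E z) / (zp - zm * E z)" for z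
  have den: "zp - zm * E (of_real t) \<noteq> 0" if "t \<ge> 0" for t
  proof -
    have "cmod (E (of_real t)) \<le> 1"
      using rate that by (simp add: E_def s_def)
    then have "cmod (zm * E (of_real t)) < cmod zp"
      using roots by (simp add: norm_mult) (meson le_less_trans mult_left_le norm_ge_zero)
    then show ?thesis by auto
  qed
  show "(\<lambda>t. f (of_real t)) 0 = 0" by (simp add: f_def E_def)
  show "((\<lambda>t. f (of_real t)) has_vector_derivative K * (f (of_real t) - zm) * (f (of_real t) - zp)) (at t)"
    if "t \<ge> 0" for t
  proof (rule has_vector_derivative_real_field)
    show "(f has_field_derivative K * (f (of_real t) - zm) * (f (of_real t) - zp)) (at (of_real t))"
      unfolding f_def[abs_def] E_def
      apply (rule derivative_eq_intros refl)+
      using den[OF that] by (auto simp: E_def s_def field_simps power2_eq_square)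
  qed
  have "filterlim (\<lambda>t. - Re s * t) at_bot at_top"
    by (rule filterlim_cmult_at_bot_at_top[OF filterlim_ident]) (use rate in \<open>auto simp: s_def\<close>)
  then have "((\<lambda>t. cmod (E (of_real t))) \<longlongrightarrow> 0) at_top"
    unfolding E_def by (simp add: filterlim_compose[OF exp_at_bot])
  then have "((\<lambda>t. E (of_real t)) \<longlongrightarrow> 0) at_top" by (rule tendsto_norm_zero_cancel)
  then have "((\<lambda>t. f (of_real t)) \<longlongrightarrow> zm * zp * (1 - 0) / (zp - zm * 0)) at_top"
    unfolding f_def by (intro tendsto_intros) (use roots in auto)
  moreover have "zp \<noteq> 0" using roots by auto
  ultimately show "((\<lambda>t. f (of_real t)) \<longlongrightarrow> zm) at_top" by simp
qed

lemma riccati_double_root_solution: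
  fixes K Z :: complex
  assumes rate: "Re (K * Z) > 0"
  obtains F where "F 0 = 0"
    and "\<And>t. t \<ge> 0 \<Longrightarrow> (F has_vector_derivative K * (F t - Z) * (F t - Z)) (at t)"
    and "(F \<longlongrightarrow> Z) at_top"
proof
  define f where "f z = Z - Z / (1 + K * Z * z)" for z
  have den_bound: "1 + Re (K * Z) * t \<le> cmod (1 + K * Z * of_real t)" for t
    using complex_Re_le_cmod[of "1 + K * Z * of_real t"] by simp
  have den: "1 + K * Z * of_real t \<noteq> 0" if "t \<ge> 0" for t
    using den_bound[of t] rate that by (smt (verit) mult_nonneg_nonneg norm_zero)
  show "(\<lambda>t. f (of_real t)) 0 = 0" by (simp add: f_def)
  show "((\<lambda>t. f (of_real t)) has_vector_derivative K * (f (of_real t) - Z) * (f (of_real t) - Z)) (at t)"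
    if "t \<ge> 0" for t
  proof (rule has_vector_derivative_real_field)
    show "(f has_field_derivative K * (f (of_real t) - Z) * (f (of_real t) - Z)) (at (of_real t))"
      unfolding f_def[abs_def]
      apply (rule derivative_eq_intros refl)+
      using den[OF that] by (auto simp: field_simps power2_eq_square)
  qed
  have "filterlim (\<lambda>t. 1 + Re (K * Z) * t) at_top at_top"
    by (intro filterlim_tendsto_add_at_top[OF tendsto_const]
        filterlim_tendsto_pos_mult_at_top[OF tendsto_const rate filterlim_ident])
  then have "filterlim (\<lambda>t. cmod (1 + K * Z * of_real t)) at_top at_top"
    by (rule filterlim_at_top_mono) (use den_bound in auto)
  then have "((\<lambda>t. Z / (1 + K * Z * of_real t)) \<longlongrightarrow> 0) at_top"
    by (intro tendsto_divide_0[OF tendsto_const]) (simp add: filterlim_at_infinity_conv_norm_at_top)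
  then have "((\<lambda>t. f (of_real t)) \<longlongrightarrow> Z - 0) at_top"
    unfolding f_def by (intro tendsto_diff tendsto_const)
  then show "((\<lambda>t. f (of_real t)) \<longlongrightarrow> Z) at_top" by simp
qed

lemma is_F_solution_unique:
  assumes F: "is_F_solution kappa gamma chi omega Omega F"
    and G: "is_F_solution kappa gamma chi omega Omega G" and "t \<ge> 0"
  shows "F t = G t"
proof -
  define B where "B = - (of_real gamma + \<i> * of_real Omega - \<i> * of_real omega)"
  have rhs: "riccati_rhs kappa gamma chi omega Omega z
      = of_real kappa * z\<^sup>2 + B * z + of_real (gamma * chi / 2)"
    for z by (simp add: riccati_rhs_def B_def algebra_simps)
  show ?thesis
    using quadratic_ode_unique[of F "of_real kappa" B "of_real (gamma * chi / 2)" G t] F G \<open>t \<ge> 0\<close>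
    unfolding is_F_solution_def rhs by simp
qed

lemma riccati_convergent_solution:
  fixes kappa gamma chi omega Omega :: real
  assumes "kappa > 0" and "gamma > 0" and "2 * kappa * chi \<le> gamma"
  obtains F L where "is_F_solution kappa gamma chi omega Omega F" and "(F \<longlongrightarrow> L) at_top"
proof -
  define a where "a = of_real gamma + \<i> * of_real Omega - \<i> * of_real omega"
  have rhs: "riccati_rhs kappa gamma chi omega Omega z
      = of_real kappa * z\<^sup>2 - a * z + of_real (gamma * chi / 2)"
    for z by (simp add: riccati_rhs_def a_def)
  have solution: "is_F_solution kappa gamma chi omega Omega F"
    if "F 0 = 0"
      and "\<And>t. t \<ge> 0 \<Longrightarrow> (F has_vector_derivative riccati_rhs kappa gamma chi omega Omega (F t)) (at t)"
    for F using that by (simp add: is_F_solution_def has_vector_derivative_at_within)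
  have "kappa \<noteq> 0" and "Re a > 0" using assms by (simp_all add: a_def)
  moreover have "4 * kappa * (gamma * chi / 2) \<le> (Re a)\<^sup>2"
    using assms by (simp add: a_def power2_eq_square mult_right_mono mult.commute mult.left_commute)
  ultimately show ?thesis
  proof (cases rule: quadratic_roots_cases)
    case (distinct zm zp)
    obtain F where "F 0 = 0"
      and "\<And>t. t \<ge> 0 \<Longrightarrow> (F has_vector_derivative of_real kappa * (F t - zm) * (F t - zp)) (at t)"
      and "(F \<longlongrightarrow> zm) at_top"
      using riccati_two_roots_solution[OF distinct(2,3)] by blast
    then show ?thesis using that solution by (metis distinct(1) rhs)
  next
    case (double z0)
    obtain F where "F 0 = 0"
      and "\<And>t. t \<ge> 0 \<Longrightarrow> (F has_vector_derivative of_real kappa * (F t - z0) * (F t - z0)) (at t)"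
      and "(F \<longlongrightarrow> z0) at_top"
      using riccati_double_root_solution[OF double(2)] by blast
    then show ?thesis using that solution by (metis double(1) rhs)
  qed
qed

theorem theorem2:
  fixes kappa gamma chi omega :: real
  assumes "kappa > 0" and "gamma > 0" and "2 * kappa * chi \<le> gamma"
  shows "\<exists>eps>0. \<forall>Omega::real. \<bar>omega - Omega\<bar> \<le> eps \<longrightarrow>
           (\<exists>F. is_F_solution kappa gamma chi omega Omega F) \<and>
           (\<forall>F. is_F_solution kappa gamma chi omega Omega F \<longrightarrow> (\<exists>L. (F \<longlongrightarrow> L) at_top))"
proof (rule exI[of _ 1], intro conjI allI impI)
  fix Omega :: real
  obtain F0 L where F0: "is_F_solution kappa gamma chi omega Omega F0" and L: "(F0 \<longlongrightarrow> L) at_top"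
    using riccati_convergent_solution[OF assms] .
  show "\<exists>F. is_F_solution kappa gamma chi omega Omega F" using F0 by blast
  fix F assume F: "is_F_solution kappa gamma chi omega Omega F"
  have "\<forall>\<^sub>F t in at_top. F0 t = F t"
    using eventually_ge_at_top[of 0] by eventually_elim (rule is_F_solution_unique[OF F0 F])
  then show "\<exists>L. (F \<longlongrightarrow> L) at_top" using Lim_transform_eventually[OF L] by blast
qed simp

end
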